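(* Let $\epsilon:[0,\infty)\to\mathbb{R}$ be a differentiable function with $\epsilon(t)>0$ and $\dot\epsilon(t)<0$ for all $t$, and $\lim_{t\to\infty}\dot\epsilon(t)\,\epsilon^{-2}(t)=0$. Then $\lim_{t\to\infty}e^{-t}\epsilon^{-1}(t)=0$. *)

theory Defs
  imports "HOL-Analysis.Analysis"
begin

end

theory Submission
  imports Defs "HOL-Real_Asymp.Real_Asymp"
begin

text \<open>The derivative of \<open>1 / \<epsilon>\<close> is \<open>-\<epsilon>'/\<epsilon>\<^sup>2\<close>, which tends to \<open>0\<close>; so \<open>1 / \<epsilon>\<close> grows at most
  linearly, and \<open>e\<^sup>-\<^sup>t\<close> beats any linear function.\<close>

lemma eventually_le_affine_if_deriv_le:
  fixes f f' :: "real \<Rightarrow> real"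
  assumes deriv: "\<And>t. t > a \<Longrightarrow> (f has_real_derivative f' t) (at t)"
    and deriv_le: "eventually (\<lambda>t. f' t \<le> c) at_top"
  obtains C where "eventually (\<lambda>t. f t \<le> C + c * t) at_top"
proof -
  obtain T0 where T0: "\<And>t. t \<ge> T0 \<Longrightarrow> f' t \<le> c"
    using deriv_le by (auto simp: eventually_at_top_linorder)
  define T where "T = max T0 (a + 1)"
  have "f t \<le> (f T - c * T) + c * t" if "t \<ge> T" for t
  proof -
    have "c * T - f T \<le> c * t - f t"
    proof (rule DERIV_nonneg_imp_nondecreasing[OF that])
      fix x assume "T \<le> x" "x \<le> t"
      then have "x > a" "x \<ge> T0"
        by (auto simp: T_def)
      then have "((\<lambda>x. c * x - f x) has_real_derivative c - f' x) (at x)" "0 \<le> c - f' x"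
        using T0 deriv[of x] by (auto intro!: derivative_eq_intros)
      then show "\<exists>y. ((\<lambda>x. c * x - f x) has_real_derivative y) (at x) \<and> 0 \<le> y"
        by blast
    qed
    then show ?thesis by linarith
  qed
  then have "eventually (\<lambda>t. f t \<le> (f T - c * T) + c * t) at_top"
    unfolding eventually_at_top_linorder by blast
  then show ?thesis
    by (rule that)
qed

lemma tendsto_exp_neg_mult_zero_if_affine_bound:
  fixes g :: "real \<Rightarrow> real"
  assumes "eventually (\<lambda>t. 0 \<le> g t) at_top"
    and "eventually (\<lambda>t. g t \<le> C + t) at_top"
  shows "((\<lambda>t. exp (- t) * g t) \<longlongrightarrow> 0) at_top"
proof (rule tendsto_sandwich[OF _ _ tendsto_const])
  show "eventually (\<lambda>t. 0 \<le> exp (- t) * g t) at_top"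
    using assms(1) by eventually_elim simp
  show "eventually (\<lambda>t. exp (- t) * g t \<le> exp (- t) * (C + t)) at_top"
    using assms(2) by eventually_elim simp
  show "((\<lambda>t. exp (- t) * (C + t)) \<longlongrightarrow> 0) at_top"
    by real_asymp
qed

theorem lemma2:
  fixes eps eps' :: "real \<Rightarrow> real"
  assumes deriv: "\<And>t. t \<ge> 0 \<Longrightarrow> (eps has_real_derivative eps' t) (at t within {0..})"
    and pos: "\<And>t. t \<ge> 0 \<Longrightarrow> eps t > 0"
    and dec: "\<And>t. t \<ge> 0 \<Longrightarrow> eps' t < 0"
    and lim: "((\<lambda>t. eps' t / (eps t)^2) \<longlongrightarrow> 0) at_top"
  shows "((\<lambda>t. exp (- t) / eps t) \<longlongrightarrow> 0) at_top"
proof -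
  have inverse_deriv: "((\<lambda>t. inverse (eps t)) has_real_derivative - (eps' t / (eps t)^2)) (at t)"
    if "t > 0" for t
  proof -
    have "(eps has_real_derivative eps' t) (at t within {0<..})"
      using deriv[of t] that by (auto intro: DERIV_subset)
    then have "(eps has_real_derivative eps' t) (at t)"
      using at_within_open[of t "{0<..}"] that by simp
    from DERIV_inverse_fun[OF this] show ?thesis
      using pos[of t] that by (simp add: divide_inverse power2_eq_square)
  qed
  have "eventually (\<lambda>t. - (eps' t / (eps t)^2) \<le> 1) at_top"
    using order_tendstoD(1)[OF lim, of "-1"] by (simp add: eventually_mono)
  then obtain C where "eventually (\<lambda>t. inverse (eps t) \<le> C + 1 * t) at_top"
    using eventually_le_affine_if_deriv_le[OF inverse_deriv] by blast
  moreover have "eventually (\<lambda>t. 0 \<le> inverse (eps t)) at_top"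
    using eventually_ge_at_top[of 0] by eventually_elim (simp add: less_imp_le pos)
  ultimately show ?thesis
    by (simp add: divide_inverse tendsto_exp_neg_mult_zero_if_affine_bound)
qed

end
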